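(* Define $H:\mathbb{N}^+\cup\{\bot\}\to\mathbb{N}^+\cup\{\bot\}$ by $H(\bot)=\bot$, $H(n)=3n/4$ if $n\equiv0\pmod4$, $H(n)=(9n+1)/8$ if $n\equiv7\pmod 8$, and $H(n)=\bot$ otherwise. Then every $H$-trajectory $(n,H(n),H^2(n),\dots)$ with $n\in\mathbb{N}^+$ contains $\bot$ if and only if every Collatz trajectory that does not contain $1$ contains some element $m$ with $m\equiv5\pmod8$ or $m\equiv7\pmod8$.
   Context: $C:\mathbb{N}^+\to\mathbb{N}^+$ is the Collatz function $C(n)=n/2$ for $n$ even and $C(n)=3n+1$ for $n$ odd; the Collatz trajectory of $n$ is $(n,C(n),C^2(n),\dots)$. *)

theory Defs
  imports Main
begin

text \<open>Collatz function on positive naturals (value at 0 is irrelevant; we only apply it to n > 0).\<close>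
definition collatz :: "nat \<Rightarrow> nat" where
  "collatz n = (if even n then n div 2 else 3 * n + 1)"

fun H :: "nat option \<Rightarrow> nat option" where
  "H None = None"
| "H (Some n) =
     (if n mod 4 = 0 then Some (3 * n div 4)
      else if n mod 8 = 7 then Some ((9 * n + 1) div 8)
      else None)"

end

theory Submission
  imports Defs
begin

text \<open>Under \<open>p \<mapsto> 8p + 1\<close>, one step of \<open>H\<close> is a stretch of the Collatz trajectory: from
  \<open>8p + 1\<close> the iterates are \<open>24p + 4, 12p + 2, 6p + 1, 18p + 4, 9p + 2\<close>. If \<open>4 | p\<close> then
  \<open>6p + 1 = 8 H(p) + 1\<close>, if \<open>p \<equiv> 7 (mod 8)\<close> then \<open>9p + 2 = 8 H(p) + 1\<close>, and no earlier value
  is \<open>1\<close> or \<open>5, 7\<close> mod \<open>8\<close> (an exit); in all other cases \<open>6p + 1\<close> or \<open>9p + 2\<close> is an exit.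
  Hence the \<open>H\<close>-trajectory of \<open>p\<close> avoids \<open>\<bottom>\<close> iff the Collatz trajectory of \<open>8p + 1\<close> has no
  exit. Conversely an exit-free Collatz trajectory reaches an odd number, which is then \<open>1\<close> mod
  \<open>8\<close>, or \<open>3\<close> mod \<open>8\<close> and two steps later \<open>1\<close> mod \<open>8\<close>.\<close>

lemma affine_mod_eq: "(a * n + b) mod m = (a * (n mod m) + b) mod (m::nat)"
  by (metis mod_add_left_eq mod_mult_right_eq)

lemma nat_mod_8_cases:
  fixes n :: nat
  obtains "n mod 8 = 0" | "n mod 8 = 1" | "n mod 8 = 2" | "n mod 8 = 3"
    | "n mod 8 = 4" | "n mod 8 = 5" | "n mod 8 = 6" | "n mod 8 = 7"
proof -
  have "n mod 8 < 8" by simp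
  then have "n mod 8 = 0 \<or> n mod 8 = 1 \<or> n mod 8 = 2 \<or> n mod 8 = 3 \<or>
      n mod 8 = 4 \<or> n mod 8 = 5 \<or> n mod 8 = 6 \<or> n mod 8 = 7" by arith
  then show thesis using that by auto
qed

definition collatz_exit :: "nat \<Rightarrow> bool" where
  "collatz_exit x \<longleftrightarrow> x = 1 \<or> x mod 8 = 5 \<or> x mod 8 = 7"

definition exit_free :: "nat \<Rightarrow> bool" where
  "exit_free x \<longleftrightarrow> (\<forall>k. \<not> collatz_exit ((collatz ^^ k) x))"

definition H_never_bot :: "nat \<Rightarrow> bool" where
  "H_never_bot p \<longleftrightarrow> (\<forall>k. (H ^^ k) (Some p) \<noteq> None)"

lemma collatz_exit_odd: "collatz_exit x \<Longrightarrow> odd x"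
  unfolding collatz_exit_def by presburger

lemma collatz_pos: "x > 0 \<Longrightarrow> collatz x > 0"
  by (auto simp: collatz_def)

lemma collatz_reaches_odd:
  assumes "x > 0"
  shows "\<exists>j. odd ((collatz ^^ j) x)"
  using assms
proof (induction x rule: less_induct)
  case (less x)
  show ?case
  proof (cases "odd x")
    case True
    then show ?thesis by (metis funpow_0)
  next
    case False
    then have "collatz x < x" "collatz x > 0"
      using less.prems collatz_pos by (auto simp: collatz_def)
    then obtain j where "odd ((collatz ^^ j) (collatz x))"
      using less.IH by blast
    then have "odd ((collatz ^^ Suc j) x)"
      by (simp add: funpow_Suc_right del: funpow.simps)
    then show ?thesis ..
  qed
qed

lemma exit_free_funpow: "exit_free x \<Longrightarrow> exit_free ((collatz ^^ j) x)"
  unfolding exit_free_def by (metis comp_apply funpow_add)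

lemma collatz_8p1_steps:
  "collatz (8*p+1) = 24*p+4" "collatz (24*p+4) = 12*p+2" "collatz (12*p+2) = 6*p+1"
  "collatz (6*p+1) = 18*p+4" "collatz (18*p+4) = 9*p+2"
  by (simp_all add: collatz_def)

lemma collatz_iterates_8p1:
  assumes "i < 6"
  shows "(collatz ^^ i) (8*p+1) = [8*p+1, 24*p+4, 12*p+2, 6*p+1, 18*p+4, 9*p+2] ! i"
proof -
  have "i \<in> {0, 1, 2, 3, 4, 5}" using assms by auto
  moreover have "(f ^^ 5) x = f ((f ^^ 4) x)" "(f ^^ 4) x = f ((f ^^ 3) x)"
    "(f ^^ 3) x = f ((f ^^ 2) x)" "(f ^^ 2) x = f (f x)" for f :: "nat \<Rightarrow> nat" and x
    by (simp_all add: eval_nat_numeral)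
  ultimately show ?thesis using collatz_8p1_steps[of p] by auto
qed

lemma collatz_iterates_8m3: "(collatz ^^ 2) (8*m+3) = 12*m+5"
proof -
  have "collatz (8*m+3) = 24*m+10" "collatz (24*m+10) = 12*m+5"
    by (simp_all add: collatz_def)
  then show ?thesis by (simp add: numeral_2_eq_2)
qed

lemma H_Some_pos: "p > 0 \<Longrightarrow> H (Some p) = Some q \<Longrightarrow> q > 0"
  by (auto split: if_splits)

lemma H_Some_collatz_segment:
  assumes "p > 0" and "H (Some p) = Some q"
  obtains j where "0 < j" "(collatz ^^ j) (8*p+1) = 8*q+1"
    "\<And>i. i < j \<Longrightarrow> \<not> collatz_exit ((collatz ^^ i) (8*p+1))"
proof -
  have first_three: "\<not> collatz_exit ((collatz ^^ i) (8*p+1))" if "i < 3" for i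
  proof -
    have "(8*p+1) mod 8 = 1" by simp
    then have "\<not> collatz_exit (8*p+1)" using \<open>p > 0\<close> by (simp add: collatz_exit_def)
    moreover have "even (24*p+4)" "even (12*p+2)" by simp_all
    then have "\<not> collatz_exit (24*p+4)" "\<not> collatz_exit (12*p+2)"
      using collatz_exit_odd by blast+
    moreover have "i = 0 \<or> i = 1 \<or> i = 2" using that by auto
    ultimately show ?thesis using collatz_iterates_8p1[of i p] by auto
  qed
  consider "p mod 4 = 0" "q = 3*p div 4" | "p mod 8 = 7" "q = (9*p+1) div 8"
    using assms(2) by (auto split: if_splits)
  then show thesis
  proof cases
    case 1
    have "(collatz ^^ 3) (8*p+1) = 8*q+1"
      using 1 collatz_iterates_8p1[of 3 p] by simp presburger
    with first_three show thesis by (intro that[of 3]) auto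
  next
    case 2
    have "(collatz ^^ 5) (8*p+1) = 8*q+1"
      using 2 collatz_iterates_8p1[of 5 p] by simp presburger
    moreover have "\<not> collatz_exit ((collatz ^^ i) (8*p+1))" if "i < 5" for i
    proof -
      have "(6*p+1) mod 8 = 3" using 2 affine_mod_eq[of 6 p 1 8] by simp
      then have "\<not> collatz_exit (6*p+1)" by (simp add: collatz_exit_def)
      moreover have "even (18*p+4)" by simp
      then have "\<not> collatz_exit (18*p+4)" using collatz_exit_odd by blast
      moreover have "i < 3 \<or> i = 3 \<or> i = 4" using that by auto
      ultimately show ?thesis using first_three collatz_iterates_8p1[of i p] by auto
    qed
    ultimately show thesis by (intro that[of 5]) auto
  qed
qed

lemma H_None_collatz_exit:
  assumes "H (Some p) = None"
  shows "\<exists>i. collatz_exit ((collatz ^^ i) (8*p+1))"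
proof -
  have "p mod 4 \<noteq> 0" "p mod 8 \<noteq> 7"
    using assms by (auto split: if_splits)
  moreover have "p mod 4 = p mod 8 mod 4" by (simp add: mod_mod_cancel)
  moreover have "(6*p+1) mod 8 = (6*(p mod 8)+1) mod 8" "(9*p+2) mod 8 = (9*(p mod 8)+2) mod 8"
    by (rule affine_mod_eq)+
  ultimately have "(6*p+1) mod 8 = 5 \<or> (6*p+1) mod 8 = 7 \<or> (9*p+2) mod 8 = 5"
    by (cases rule: nat_mod_8_cases[of p]) simp_all
  then have "collatz_exit ((collatz ^^ 3) (8*p+1)) \<or> collatz_exit ((collatz ^^ 5) (8*p+1))"
    using collatz_iterates_8p1[of 3 p] collatz_iterates_8p1[of 5 p]
    by (auto simp: collatz_exit_def)
  then show ?thesis by blast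
qed

lemma H_never_bot_step:
  assumes "H_never_bot p" and "H (Some p) = Some q"
  shows "H_never_bot q"
  unfolding H_never_bot_def
proof
  fix k
  have "(H ^^ k) (Some q) = (H ^^ Suc k) (Some p)"
    using assms(2) by (simp add: funpow_Suc_right del: funpow.simps)
  moreover have "(H ^^ Suc k) (Some p) \<noteq> None"
    using assms(1) unfolding H_never_bot_def by blast
  ultimately show "(H ^^ k) (Some q) \<noteq> None" by simp
qed

lemma H_never_bot_imp_exit_free:
  assumes "p > 0" and "H_never_bot p"
  shows "exit_free (8*p+1)"
proof -
  have "\<not> collatz_exit ((collatz ^^ k) (8*p+1))" for k
    using assms
  proof (induction k arbitrary: p rule: less_induct)
    case (less k)
    have "(H ^^ 1) (Some p) \<noteq> None"
      using less.prems(2) unfolding H_never_bot_def by blast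
    then have "H (Some p) \<noteq> None" by simp
    then obtain q where q: "H (Some p) = Some q" by blast
    obtain j where j: "0 < j" "(collatz ^^ j) (8*p+1) = 8*q+1"
      and before: "\<And>i. i < j \<Longrightarrow> \<not> collatz_exit ((collatz ^^ i) (8*p+1))"
      using H_Some_collatz_segment[OF less.prems(1) q] by blast
    show ?case
    proof (cases "k < j")
      case True
      then show ?thesis by (rule before)
    next
      case False
      then have "k = (k - j) + j" by simp
      then have "(collatz ^^ k) (8*p+1) = (collatz ^^ (k - j)) (8*q+1)"
        using j(2) by (metis comp_apply funpow_add)
      moreover have "\<not> collatz_exit ((collatz ^^ (k - j)) (8*q+1))"
      proof (rule less.IH)
        show "k - j < k" using j(1) False by simp
        show "q > 0" using H_Some_pos[OF less.prems(1) q] .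
        show "H_never_bot q" using H_never_bot_step[OF less.prems(2) q] .
      qed
      ultimately show ?thesis by simp
    qed
  qed
  then show ?thesis by (simp add: exit_free_def)
qed

lemma exit_free_imp_H_never_bot:
  assumes "exit_free (8*p+1)"
  shows "H_never_bot p"
proof -
  have "(H ^^ k) (Some p) \<noteq> None" for k
    using assms
  proof (induction k arbitrary: p)
    case 0
    show ?case by simp
  next
    case (Suc k)
    have "\<not> collatz_exit ((collatz ^^ 0) (8*p+1))"
      using Suc.prems unfolding exit_free_def by blast
    then have "p > 0" by (auto simp: collatz_exit_def)
    have "H (Some p) \<noteq> None"
      using H_None_collatz_exit Suc.prems unfolding exit_free_def by blast
    then obtain q where q: "H (Some p) = Some q" by blast
    obtain j where "(collatz ^^ j) (8*p+1) = 8*q+1"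
      using H_Some_collatz_segment[OF \<open>p > 0\<close> q] by blast
    then have "exit_free (8*q+1)"
      using exit_free_funpow[OF Suc.prems, of j] by simp
    then have "(H ^^ k) (Some q) \<noteq> None" by (rule Suc.IH)
    then show ?case
      using q by (simp add: funpow_Suc_right del: funpow.simps)
  qed
  then show ?thesis by (simp add: H_never_bot_def)
qed

text \<open>The hypothesis \<open>p > 0\<close> is needed: \<open>H\<close> fixes \<open>0\<close>, while \<open>8 \<cdot> 0 + 1 = 1\<close> is an exit.\<close>

lemma H_never_bot_iff_exit_free: "p > 0 \<Longrightarrow> H_never_bot p \<longleftrightarrow> exit_free (8*p+1)"
  using H_never_bot_imp_exit_free exit_free_imp_H_never_bot by blast

lemma exit_free_reaches_8p1:
  assumes "x > 0" and "exit_free x"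
  obtains j p where "p > 0" "(collatz ^^ j) x = 8*p+1"
proof -
  obtain j where "odd ((collatz ^^ j) x)"
    using collatz_reaches_odd[OF assms(1)] by blast
  define y where "y = (collatz ^^ j) x"
  have "odd y" using \<open>odd ((collatz ^^ j) x)\<close> by (simp add: y_def)
  have "exit_free y" using exit_free_funpow[OF assms(2)] by (simp add: y_def)
  then have y: "\<not> collatz_exit y" and z: "\<not> collatz_exit ((collatz ^^ 2) y)"
    unfolding exit_free_def by (metis funpow_0)+
  have "y mod 8 = 1 \<or> y mod 8 = 3"
    using \<open>odd y\<close> y unfolding collatz_exit_def by presburger
  then show thesis
  proof
    assume "y mod 8 = 1"
    then have "8 * (y div 8) + 1 = y" "y div 8 > 0"
      using y unfolding collatz_exit_def by presburger+
    then show thesis by (intro that[of "y div 8" j]) (simp_all add: y_def[symmetric])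
  next
    assume "y mod 8 = 3"
    define m where "m = y div 8"
    have "y = 8*m+3" using \<open>y mod 8 = 3\<close> unfolding m_def by presburger
    then have "(collatz ^^ 2) y = 12*m+5"
      by (simp add: collatz_iterates_8m3)
    moreover have "(collatz ^^ (2 + j)) x = (collatz ^^ 2) y"
      by (simp only: y_def funpow_add comp_apply)
    moreover have "\<not> collatz_exit (12*m+5)"
      using z \<open>(collatz ^^ 2) y = 12*m+5\<close> by simp
    then have "(12*m+5) mod 8 = 1" unfolding collatz_exit_def by presburger
    then have "8 * ((12*m+5) div 8) + 1 = 12*m+5" "(12*m+5) div 8 > 0" by presburger+
    ultimately show thesis by (intro that[of "(12*m+5) div 8" "2 + j"]) simp_all
  qed
qed

lemma ex_exit_free_iff_ex_exit_free_8p1: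
  "(\<exists>n > 0. exit_free n) \<longleftrightarrow> (\<exists>p > 0. exit_free (8*p+1))"
proof
  assume "\<exists>n > 0. exit_free n"
  then obtain n where "n > 0" "exit_free n" by blast
  then obtain j p where "p > 0" and jp: "(collatz ^^ j) n = 8*p+1"
    by (rule exit_free_reaches_8p1)
  have "exit_free ((collatz ^^ j) n)"
    using \<open>exit_free n\<close> by (rule exit_free_funpow)
  then have "exit_free (8*p+1)" by (simp only: jp)
  with \<open>p > 0\<close> show "\<exists>p > 0. exit_free (8*p+1)" by blast
next
  assume "\<exists>p > 0. exit_free (8*p+1)"
  then obtain p where "exit_free (8*p+1)" by blast
  then show "\<exists>n > 0. exit_free n" by (intro exI[of _ "8*p+1"]) simp
qed

theorem mainTheorem18:
  shows "(\<forall>n::nat. n > 0 \<longrightarrow> (\<exists>k. (H ^^ k) (Some n) = None)) \<longleftrightarrow>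
         (\<forall>n::nat. n > 0 \<longrightarrow> (\<forall>k. (collatz ^^ k) n \<noteq> 1) \<longrightarrow>
            (\<exists>k. (collatz ^^ k) n mod 8 = 5 \<or> (collatz ^^ k) n mod 8 = 7))"
proof -
  have "(\<forall>n::nat. n > 0 \<longrightarrow> (\<exists>k. (H ^^ k) (Some n) = None))
      \<longleftrightarrow> (\<forall>p::nat. p > 0 \<longrightarrow> \<not> H_never_bot p)"
    by (simp add: H_never_bot_def)
  also have "\<dots> \<longleftrightarrow> \<not> (\<exists>p > 0. exit_free (8*p+1))"
    using H_never_bot_iff_exit_free by blast
  also have "\<dots> \<longleftrightarrow> \<not> (\<exists>n > 0. exit_free n)"
    by (simp only: ex_exit_free_iff_ex_exit_free_8p1)
  also have "\<dots> \<longleftrightarrow> (\<forall>n::nat. n > 0 \<longrightarrow> (\<forall>k. (collatz ^^ k) n \<noteq> 1) \<longrightarrow>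
            (\<exists>k. (collatz ^^ k) n mod 8 = 5 \<or> (collatz ^^ k) n mod 8 = 7))"
    unfolding exit_free_def collatz_exit_def by blast
  finally show ?thesis .
qed

end
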